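(* Let $n\ge 2$, $r>0$, $f\in C(I_n)$ where $I_n=\{\bm{x}\in\mathbb{R}^n: |x_i|\le r,\ i=1,\dots,n\}$, and let $h^f_*\in\mathcal{H}_-(I_n,f)$. Assume that $f-h^f_*=0$ on $D_n$. Then $h^f_*$ is a best one-sided $L^1$-approximant from below to $f$ with respect to $\mathcal{H}(I_n)$, i.e. $\|f-h^f_*\|_1\le\|f-h\|_1$ for every $h\in\mathcal{H}_-(I_n,f)$.
   Context: $\mathcal{H}(I_n)$ is the space of functions harmonic ($C^2$ with vanishing Laplacian) in some domain containing $I_n$; $\mathcal{H}_-(I_n,f)=\{h\in\mathcal{H}(I_n): h\le f \text{ on } I_n\}$; $\|g\|_1=\int_{I_n}|g|\,d\lambda_n$ with $\lambda_n$ Lebesgue measure. For $1\le i<j\le n$, $D^{ij}_n=\{\bm{x}\in I_n : |x_k|\le |x_i|=|x_j| \text{ for all } k\ne i,j\}$, and $D_n=\bigcup_{1\le i<j\le n}D^{ij}_n$. *)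

theory Defs
  imports "HOL-Analysis.Analysis"
begin

definition cube :: "real \<Rightarrow> (real^'n) set" where
  "cube r = {x. \<forall>i. \<bar>x $ i\<bar> \<le> r}"

definition harmonic_on :: "(real^'n) set \<Rightarrow> (real^'n \<Rightarrow> real) \<Rightarrow> bool" where
  "harmonic_on U h \<longleftrightarrow> open U \<and>
     (\<exists>Dh :: real^'n \<Rightarrow> ((real^'n) \<Rightarrow>\<^sub>L real).
      \<exists>D2h :: real^'n \<Rightarrow> ((real^'n) \<Rightarrow>\<^sub>L ((real^'n) \<Rightarrow>\<^sub>L real)).
        (\<forall>x\<in>U. (h has_derivative blinfun_apply (Dh x)) (at x)) \<and>
        (\<forall>x\<in>U. (Dh has_derivative blinfun_apply (D2h x)) (at x)) \<and>
        continuous_on U D2h \<and>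
        (\<forall>x\<in>U. (\<Sum>i\<in>UNIV. blinfun_apply (blinfun_apply (D2h x) (axis i 1)) (axis i 1)) = 0))"

definition harmonic_near :: "(real^'n) set \<Rightarrow> (real^'n \<Rightarrow> real) set" where
  "harmonic_near K = {h. \<exists>U. K \<subseteq> U \<and> harmonic_on U h}"

definition harmonic_below :: "(real^'n) set \<Rightarrow> (real^'n \<Rightarrow> real) \<Rightarrow> (real^'n \<Rightarrow> real) set" where
  "harmonic_below K f = {h \<in> harmonic_near K. \<forall>x\<in>K. h x \<le> f x}"

definition L1norm :: "(real^'n) set \<Rightarrow> (real^'n \<Rightarrow> real) \<Rightarrow> real" where
  "L1norm K g = integral\<^sup>L (lebesgue_on K) (\<lambda>x. \<bar>g x\<bar>)"

definition diag_set :: "real \<Rightarrow> (real^'n) set" where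
  "diag_set r = (\<Union>i. \<Union>j\<in>UNIV - {i}.
      {x \<in> cube r. \<bar>x $ i\<bar> = \<bar>x $ j\<bar> \<and> (\<forall>k. k \<noteq> i \<and> k \<noteq> j \<longrightarrow> \<bar>x $ k\<bar> \<le> \<bar>x $ i\<bar>)})"

end

theory Submission
  imports Defs
begin

text \<open>Put g = h - h*, which is harmonic near I_n and, since h \<le> f = h* on D_n, satisfies
  g \<le> 0 on D_n. As \<parallel>f - h\<parallel>_1 = \<parallel>f - h*\<parallel>_1 - \<integral> g, it suffices to show \<integral> g \<le> 0 over I_n.
  Outside D_n the cube is covered by the disjoint double pyramids
  P_k = {x. |x_j| < |x_k| for j \<noteq> k}. With the weight W(x) = (r - \<parallel>x\<parallel>_\<infinity>)^2/2 and \<Delta>g = 0,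
  the indicator of I_n times g is bounded by \<Sum>_k 1_{I_n} (1_{P_k} g - W \<partial>_k^2 g).
  On a line in direction e_k through the cube, with m the largest |x_j| for j \<noteq> k, the weight is
  (r - max |t| m)^2/2, and two integrations by parts turn the integral of the k-th summand into
  (r - m)(g(m) + g(-m)), which is \<le> 0 because the points t = \<plusminus>m lie in D_n.
  Fubini along the k-th coordinate finishes the argument.\<close>

lemma has_integral_real_derivative:
  fixes F f :: "real \<Rightarrow> real"
  assumes "a \<le> b" and "\<And>t. t \<in> {a..b} \<Longrightarrow> (F has_real_derivative f t) (at t)"
  shows "(f has_integral (F b - F a)) {a..b}"
  using assms by (intro fundamental_theorem_of_calculus)
    (auto simp: has_real_derivative_iff_has_vector_derivative[symmetric] intro: has_field_derivative_at_within)

lemma has_integral_plateau_weight: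
  fixes u v w :: "real \<Rightarrow> real"
  assumes "0 \<le> m" "m \<le> r"
    and u': "\<And>t. t \<in> {-r..r} \<Longrightarrow> (u has_real_derivative v t) (at t)"
    and v': "\<And>t. t \<in> {-r..r} \<Longrightarrow> (v has_real_derivative w t) (at t)"
  shows "((\<lambda>t. (if m < \<bar>t\<bar> then u t else 0) - (r - max \<bar>t\<bar> m)^2/2 * w t)
          has_integral (r - m) * (u m + u (-m))) {-r..r}"
proof -
  let ?H = "\<lambda>t. (if m < \<bar>t\<bar> then u t else 0) - (r - max \<bar>t\<bar> m)^2/2 * w t"
  define R where "R t = (t - r) * u t - (r - t)^2/2 * v t" for t
  define L where "L t = (t + r) * u t - (r + t)^2/2 * v t" for t
  define M where "M t = - ((r - m)^2/2) * v t" for t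
  have "((\<lambda>t. u t - (r - t)^2/2 * w t) has_integral (R r - R m)) {m..r}"
  proof (rule has_integral_real_derivative)
    fix t assume "t \<in> {m..r}"
    then have t: "t \<in> {-r..r}" using assms(1) by auto
    show "(R has_real_derivative (u t - (r - t)^2/2 * w t)) (at t)"
      unfolding R_def
      by (rule derivative_eq_intros u'[OF t] v'[OF t] refl | simp)+ (simp add: power2_eq_square field_simps)
  qed (fact assms(2))
  then have right: "(?H has_integral (R r - R m)) {m..r}"
    by (rule has_integral_spike_finite[of "{m}", rotated 2]) (use assms(1) in auto)
  have "((\<lambda>t. u t - (r + t)^2/2 * w t) has_integral (L (-m) - L (-r))) {-r..-m}"
  proof (rule has_integral_real_derivative)
    fix t assume "t \<in> {-r..-m}"
    then have t: "t \<in> {-r..r}" using assms(1) by auto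
    show "(L has_real_derivative (u t - (r + t)^2/2 * w t)) (at t)"
      unfolding L_def
      by (rule derivative_eq_intros u'[OF t] v'[OF t] refl | simp)+ (simp add: power2_eq_square field_simps)
  qed (use assms(2) in simp)
  then have left: "(?H has_integral (L (-m) - L (-r))) {-r..-m}"
    by (rule has_integral_spike_finite[of "{-m}", rotated 2]) (use assms(1) in auto)
  have "((\<lambda>t. - ((r - m)^2/2) * w t) has_integral (M m - M (-m))) {-m..m}"
  proof (rule has_integral_real_derivative)
    fix t assume "t \<in> {-m..m}"
    then have t: "t \<in> {-r..r}" using assms(2) by auto
    show "(M has_real_derivative (- ((r - m)^2/2) * w t)) (at t)"
      unfolding M_def by (rule derivative_eq_intros v'[OF t] refl | simp)+
  qed (use assms(1) in simp)
  then have middle: "(?H has_integral (M m - M (-m))) {-m..m}"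
    by (rule has_integral_spike_finite[of "{}", rotated 2]) auto
  have "(?H has_integral (L (-m) - L (-r) + (M m - M (-m)) + (R r - R m))) {-r..r}"
    using assms
    by (intro has_integral_combine[OF _ _ has_integral_combine[OF _ _ left middle] right]) auto
  moreover have "L (-m) - L (-r) + (M m - M (-m)) + (R r - R m) = (r - m) * (u m + u (-m))"
    unfolding R_def L_def M_def by (simp add: algebra_simps power2_eq_square)
  ultimately show ?thesis by simp
qed

definition vec_upd :: "real^'n \<Rightarrow> 'n \<Rightarrow> real \<Rightarrow> real^'n" where
  "vec_upd x k t = (\<chi> j. if j = k then t else x $ j)"

lemma vec_upd_nth [simp]: "vec_upd x k t $ j = (if j = k then t else x $ j)"
  by (simp add: vec_upd_def)

lemma has_vector_derivative_vec_upd: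
  fixes g :: "real^'n \<Rightarrow> 'b::real_normed_vector" and L :: "(real^'n) \<Rightarrow>\<^sub>L 'b"
  assumes "(g has_derivative blinfun_apply L) (at (vec_upd x k t))"
  shows "((\<lambda>t. g (vec_upd x k t)) has_vector_derivative L (axis k 1)) (at t)"
proof -
  have "vec_upd x k = (\<lambda>t. vec_upd x k 0 + t *\<^sub>R axis k 1)"
    by (auto simp: vec_eq_iff axis_def)
  moreover have "((\<lambda>t. vec_upd x k 0 + t *\<^sub>R axis k 1) has_derivative (\<lambda>s. s *\<^sub>R axis k 1)) (at t)"
    by (rule derivative_eq_intros refl)+ simp
  ultimately have "(vec_upd x k has_derivative (\<lambda>s. s *\<^sub>R axis k 1)) (at t)"
    by simp
  from diff_chain_at[OF this assms] show ?thesis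
    by (simp add: has_vector_derivative_def comp_def blinfun.scaleR_right)
qed

lemma vec_nth_sum_Basis: "(\<Sum>b\<in>Basis. c b *\<^sub>R b :: real^'n) $ j = c (axis j 1)"
proof -
  have "(\<Sum>b\<in>Basis. c b *\<^sub>R b :: real^'n) $ j = (\<Sum>b\<in>Basis. c b * (b \<bullet> axis j 1))"
    by (simp add: cart_eq_inner_axis inner_sum_left)
  also have "\<dots> = (\<Sum>b\<in>Basis. if b = axis j 1 then c b else 0)"
    by (rule sum.cong) (auto simp: inner_Basis)
  finally show ?thesis by simp
qed

lemma sum_Basis_fun_upd_axis:
  "(\<Sum>b\<in>Basis. (F(axis k 1 := t)) b *\<^sub>R b :: real^'n)
     = vec_upd (\<Sum>b\<in>Basis. (F(axis k 1 := 0)) b *\<^sub>R b) k t"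
proof (subst vec_eq_iff, intro allI)
  fix j
  have "axis j (1::real) = axis k 1 \<longleftrightarrow> j = k"
    by (simp add: axis_eq_axis)
  then show "(\<Sum>b\<in>Basis. (F(axis k 1 := t)) b *\<^sub>R b) $ j
      = vec_upd (\<Sum>b\<in>Basis. (F(axis k 1 := 0)) b *\<^sub>R b) k t $ j"
    by (simp only: vec_nth_sum_Basis fun_upd_apply vec_upd_nth) simp
qed

lemma integral_lborel_nonpos_by_lines:
  fixes G :: "real^'n \<Rightarrow> real"
  assumes "integrable lborel G"
    and lines: "\<And>x. integral\<^sup>L lborel (\<lambda>t. G (vec_upd x k t)) \<le> 0"
  shows "integral\<^sup>L lborel G \<le> 0"
proof -
  let ?S = "\<lambda>F. \<Sum>b\<in>Basis. F b *\<^sub>R b :: real^'n"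
  let ?e = "axis k 1 :: real^'n"
  interpret product_sigma_finite "\<lambda>_::real^'n. lborel :: real measure" by standard
  have Gm: "G \<in> borel_measurable borel" using assms(1) by auto
  have Sm: "?S \<in> measurable (Pi\<^sub>M Basis (\<lambda>_. lborel)) borel" by measurable
  have "integral\<^sup>L lborel G = integral\<^sup>L (Pi\<^sub>M Basis (\<lambda>_. lborel)) (\<lambda>F. G (?S F))"
    by (subst lborel_eq[where 'a="real^'n"]) (simp add: integral_distr Sm Gm)
  also have "\<dots> = (\<integral>F. (\<integral>t. G (?S (F(?e := t))) \<partial>lborel) \<partial>Pi\<^sub>M (Basis - {?e}) (\<lambda>_. lborel))"
  proof -
    have "integrable (Pi\<^sub>M Basis (\<lambda>_. lborel)) (\<lambda>F. G (?S F))"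
      using assms(1) by (subst (asm) lborel_eq[where 'a="real^'n"]) (simp add: integrable_distr_eq Sm Gm)
    moreover have "Basis = insert ?e (Basis - {?e})" by auto
    ultimately show ?thesis
      by (subst (1 2) \<open>Basis = _\<close>, subst product_integral_insert) auto
  qed
  also have "\<dots> \<le> 0"
  proof -
    have "(\<integral>t. G (?S (F(?e := t))) \<partial>lborel) \<le> 0" for F
    proof -
      define x where "x = ?S (F(?e := 0))"
      have "?S (F(?e := t)) = vec_upd x k t" for t
        unfolding x_def by (rule sum_Basis_fun_upd_axis)
      then show ?thesis using lines[of x] by (simp only:)
    qed
    then show ?thesis
      using integral_nonneg_AE[of "\<lambda>F. - (\<integral>t. G (?S (F(?e := t))) \<partial>lborel)"] by simp
  qed
  finally show ?thesis .
qed

lemma infnorm_cart_Max: "infnorm (x::real^'n) = Max (range (\<lambda>j. \<bar>x $ j\<bar>))"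
proof -
  have "{\<bar>x $ j\<bar> |j. j \<in> UNIV} = range (\<lambda>j. \<bar>x $ j\<bar>)" by auto
  then show ?thesis by (simp add: infnorm_cart cSup_eq_Max)
qed

lemma cube_eq_cbox: "cube r = cbox (\<chi> i. -r) (\<chi> i. r)"
proof (rule set_eqI)
  show "x \<in> cube r \<longleftrightarrow> x \<in> cbox (\<chi> i. -r) (\<chi> i. r)" for x :: "real^'n"
    unfolding cube_def mem_box_cart mem_Collect_eq vec_lambda_beta abs_le_iff
    by (meson minus_le_iff)
qed

definition pyramid :: "'n \<Rightarrow> (real^'n) set" where
  "pyramid k = {x. \<forall>j. j \<noteq> k \<longrightarrow> \<bar>x $ j\<bar> < \<bar>x $ k\<bar>}"

lemma open_pyramid: "open (pyramid (k::'n::finite))"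
proof -
  have "open (\<Inter>j\<in>UNIV - {k}. {x::real^'n. \<bar>x $ j\<bar> < \<bar>x $ k\<bar>})"
    by (intro open_INT ballI open_Collect_less continuous_intros) auto
  moreover have "pyramid k = (\<Inter>j\<in>UNIV - {k}. {x. \<bar>x $ j\<bar> < \<bar>x $ k\<bar>})"
    by (auto simp: pyramid_def)
  ultimately show ?thesis by simp
qed

lemma pyramid_unique: "x \<in> pyramid k \<Longrightarrow> x \<in> pyramid l \<Longrightarrow> k = l"
  unfolding pyramid_def by force

lemma diag_setI:
  assumes "x \<in> cube r" "i \<noteq> j" "\<bar>x $ i\<bar> = \<bar>x $ j\<bar>" "\<And>l. \<bar>x $ l\<bar> \<le> \<bar>x $ i\<bar>"
  shows "x \<in> diag_set r"
proof -
  have x: "x \<in> {x \<in> cube r. \<bar>x $ i\<bar> = \<bar>x $ j\<bar> \<and> (\<forall>k. k \<noteq> i \<and> k \<noteq> j \<longrightarrow> \<bar>x $ k\<bar> \<le> \<bar>x $ i\<bar>)}"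
    using assms by simp
  have j: "j \<in> UNIV - {i}" using assms(2) by simp
  show ?thesis unfolding diag_set_def
    by (rule UN_I[where a=i, OF UNIV_I], rule UN_I[where a=j, OF j], rule x)
qed

lemma mem_diag_set_if_not_pyramid:
  assumes "x \<in> cube r" and "\<And>k. x \<notin> pyramid k"
  shows "x \<in> diag_set r"
proof -
  have "infnorm x \<in> range (\<lambda>j. \<bar>x $ j\<bar>)"
    unfolding infnorm_cart_Max by (rule Max_in) auto
  then obtain i where i: "\<bar>x $ i\<bar> = infnorm x" by auto
  then have le: "\<bar>x $ l\<bar> \<le> \<bar>x $ i\<bar>" for l
    by (simp add: component_le_infnorm_cart)
  obtain j where "j \<noteq> i" "\<bar>x $ i\<bar> \<le> \<bar>x $ j\<bar>"
    using assms(2)[of i] by (auto simp: pyramid_def not_less)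
  with le[of j] show ?thesis
    by (intro diag_setI[OF assms(1), of i j] le) auto
qed

lemma le_sum_pyramid_indicator:
  fixes x :: "real^'n" and a :: real
  assumes "x \<in> cube r" and "x \<in> diag_set r \<Longrightarrow> a \<le> 0"
  shows "a \<le> (\<Sum>k\<in>UNIV. if x \<in> pyramid k then a else 0)"
proof (cases "\<exists>k. x \<in> pyramid k")
  case True
  then obtain k where "x \<in> pyramid k" by blast
  then have "(\<Sum>l\<in>UNIV. if x \<in> pyramid l then a else 0) = (\<Sum>l\<in>UNIV. if l = k then a else 0)"
    by (intro sum.cong) (auto dest: pyramid_unique)
  then show ?thesis by simp
next
  case False
  then show ?thesis using assms mem_diag_set_if_not_pyramid by auto
qed

lemma cube_line_profile:
  fixes x :: "real^'n"
  assumes "CARD('n) \<ge> 2" and "\<And>j. j \<noteq> k \<Longrightarrow> \<bar>x $ j\<bar> \<le> r"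
  obtains m where "0 \<le> m" "m \<le> r"
    and "\<And>t. infnorm (vec_upd x k t) = max \<bar>t\<bar> m"
    and "\<And>t. vec_upd x k t \<in> pyramid k \<longleftrightarrow> m < \<bar>t\<bar>"
    and "\<And>t. vec_upd x k t \<in> cube r \<longleftrightarrow> t \<in> {-r..r}"
    and "\<And>t. \<bar>t\<bar> = m \<Longrightarrow> vec_upd x k t \<in> diag_set r"
proof -
  define A where "A = (\<lambda>j. \<bar>x $ j\<bar>) ` (UNIV - {k})"
  have "UNIV - {k} \<noteq> {}"
  proof
    assume "UNIV - {k} = {}"
    then have "CARD('n) \<le> card {k}" by (intro card_mono) auto
    with assms(1) show False by simp
  qed
  then have A: "finite A" "A \<noteq> {}" by (auto simp: A_def)
  define m where "m = Max A"
  have "m \<in> A" unfolding m_def using A by (rule Max_in)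
  then obtain j where j: "j \<noteq> k" "\<bar>x $ j\<bar> = m" by (auto simp: A_def)
  have le_m: "\<bar>x $ l\<bar> \<le> m" if "l \<noteq> k" for l
    using A that by (auto simp: m_def A_def)
  show thesis
  proof
    show "0 \<le> m" using j by auto
    show "m \<le> r" using j assms(2) by auto
    show "infnorm (vec_upd x k t) = max \<bar>t\<bar> m" for t
    proof -
      have "range (\<lambda>j. \<bar>vec_upd x k t $ j\<bar>) = insert \<bar>t\<bar> A"
        by (auto simp: A_def image_iff) blast
      then show ?thesis using A by (simp add: infnorm_cart_Max m_def Max_insert)
    qed
    show "vec_upd x k t \<in> pyramid k \<longleftrightarrow> m < \<bar>t\<bar>" for t
    proof -
      have "vec_upd x k t \<in> pyramid k \<longleftrightarrow> (\<forall>a\<in>A. a < \<bar>t\<bar>)"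
        by (auto simp: pyramid_def A_def)
      then show ?thesis using A by (simp add: m_def)
    qed
    show "vec_upd x k t \<in> cube r \<longleftrightarrow> t \<in> {-r..r}" for t
      using assms(2) by (auto simp: cube_def abs_le_iff)
    show "vec_upd x k t \<in> diag_set r" if "\<bar>t\<bar> = m" for t
    proof (rule diag_setI[of _ r k j])
      show "vec_upd x k t \<in> cube r" using that j assms(2)[of j] assms(2) by (auto simp: cube_def)
    qed (use that j le_m in auto)
  qed
qed

lemma integral_lborel_nonpos_if_has_integral:
  fixes f :: "'a::euclidean_space \<Rightarrow> real"
  assumes "(f has_integral c) UNIV" and "c \<le> 0"
  shows "integral\<^sup>L lborel f \<le> 0"
proof (cases "integrable lborel f")
  case True
  with assms show ?thesis
    using has_integral_unique[OF has_integral_integral_lborel[OF True]] by simp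
qed (simp add: not_integrable_integral_eq)

definition pyramid_term :: "real \<Rightarrow> (real^'n \<Rightarrow> real) \<Rightarrow> (real^'n \<Rightarrow> real) \<Rightarrow> 'n \<Rightarrow> real^'n \<Rightarrow> real" where
  "pyramid_term r g gkk k x =
     indicator (cube r) x * ((if x \<in> pyramid k then g x else 0) - (r - infnorm x)^2/2 * gkk x)"

lemma integrable_pyramid_term:
  assumes "continuous_on (cube r) g" and "continuous_on (cube r) gkk"
  shows "integrable lborel (pyramid_term r g gkk k)"
proof -
  have cube: "compact (cube r)" by (simp add: cube_eq_cbox)
  have "pyramid k \<in> sets lborel" by (simp add: borel_open open_pyramid)
  then have "integrable lborel (\<lambda>x. indicator (pyramid k) x *\<^sub>R (indicator (cube r) x *\<^sub>R g x))"
    by (rule integrable_mult_indicator[OF _ borel_integrable_compact[OF cube assms(1)]])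
  moreover have "integrable lborel (\<lambda>x. indicator (cube r) x *\<^sub>R ((r - infnorm x)^2/2 * gkk x))"
    by (intro borel_integrable_compact cube continuous_intros assms(2)) auto
  ultimately have "integrable lborel (\<lambda>x. indicator (pyramid k) x *\<^sub>R (indicator (cube r) x *\<^sub>R g x)
      - indicator (cube r) x *\<^sub>R ((r - infnorm x)^2/2 * gkk x))"
    by (rule Bochner_Integration.integrable_diff)
  moreover have "pyramid_term r g gkk k = (\<lambda>x. indicator (pyramid k) x *\<^sub>R (indicator (cube r) x *\<^sub>R g x)
      - indicator (cube r) x *\<^sub>R ((r - infnorm x)^2/2 * gkk x))"
    by (auto simp: fun_eq_iff pyramid_term_def indicator_def)
  ultimately show ?thesis by simp
qed

lemma indicator_cube_le_sum_pyramid_term: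
  assumes "x \<in> cube r \<Longrightarrow> (\<Sum>k\<in>UNIV. gkk k x) = 0" and "x \<in> diag_set r \<Longrightarrow> g x \<le> 0"
  shows "indicator (cube r) x * g x \<le> (\<Sum>k\<in>UNIV. pyramid_term r g (gkk k) k x)"
proof (cases "x \<in> cube r")
  case True
  then have "(\<Sum>k\<in>UNIV. pyramid_term r g (gkk k) k x)
      = (\<Sum>k\<in>UNIV. if x \<in> pyramid k then g x else 0) - (r - infnorm x)^2/2 * (\<Sum>k\<in>UNIV. gkk k x)"
    by (simp add: pyramid_term_def sum_subtractf sum_distrib_left)
  also have "\<dots> = (\<Sum>k\<in>UNIV. if x \<in> pyramid k then g x else 0)"
    using True assms(1) by simp
  finally show ?thesis using True assms(2) by (simp add: le_sum_pyramid_indicator)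
qed (simp add: pyramid_term_def)

lemma line_integral_pyramid_term_nonpos:
  fixes g :: "real^'n \<Rightarrow> real" and Dg :: "real^'n \<Rightarrow> (real^'n) \<Rightarrow>\<^sub>L real"
    and D2g :: "real^'n \<Rightarrow> (real^'n) \<Rightarrow>\<^sub>L ((real^'n) \<Rightarrow>\<^sub>L real)"
  assumes "CARD('n) \<ge> 2" and "cube r \<subseteq> U"
    and g': "\<And>x. x \<in> U \<Longrightarrow> (g has_derivative blinfun_apply (Dg x)) (at x)"
    and g'': "\<And>x. x \<in> U \<Longrightarrow> (Dg has_derivative blinfun_apply (D2g x)) (at x)"
    and diag: "\<And>x. x \<in> diag_set r \<Longrightarrow> g x \<le> 0"
  shows "integral\<^sup>L lborel (\<lambda>t. pyramid_term r g (\<lambda>x. D2g x (axis k 1) (axis k 1)) k (vec_upd x k t)) \<le> 0"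
proof (cases "\<forall>j. j \<noteq> k \<longrightarrow> \<bar>x $ j\<bar> \<le> r")
  case False
  then have "vec_upd x k t \<notin> cube r" for t by (auto simp: cube_def)
  then show ?thesis by (simp add: pyramid_term_def)
next
  case True
  then obtain m where m: "0 \<le> m" "m \<le> r"
    and infnorm: "\<And>t. infnorm (vec_upd x k t) = max \<bar>t\<bar> m"
    and pyramid: "\<And>t. vec_upd x k t \<in> pyramid k \<longleftrightarrow> m < \<bar>t\<bar>"
    and cube: "\<And>t. vec_upd x k t \<in> cube r \<longleftrightarrow> t \<in> {-r..r}"
    and diag_line: "\<And>t. \<bar>t\<bar> = m \<Longrightarrow> vec_upd x k t \<in> diag_set r"
    using cube_line_profile[OF assms(1)] by metis
  define u where "u t = g (vec_upd x k t)" for t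
  define v where "v t = Dg (vec_upd x k t) (axis k 1)" for t
  define w where "w t = D2g (vec_upd x k t) (axis k 1) (axis k 1)" for t
  have U: "vec_upd x k t \<in> U" if "t \<in> {-r..r}" for t
    using that cube assms(2) by blast
  have u': "(u has_real_derivative v t) (at t)" if "t \<in> {-r..r}" for t
    using has_vector_derivative_vec_upd[OF g'[OF U[OF that]]]
    unfolding u_def v_def has_real_derivative_iff_has_vector_derivative .
  have v': "(v has_real_derivative w t) (at t)" if "t \<in> {-r..r}" for t
    using bounded_linear.has_vector_derivative[OF blinfun.bounded_linear_left
        has_vector_derivative_vec_upd[OF g''[OF U[OF that]]]]
    unfolding v_def w_def has_real_derivative_iff_has_vector_derivative .
  have line_eq: "(\<lambda>t. pyramid_term r g (\<lambda>x. D2g x (axis k 1) (axis k 1)) k (vec_upd x k t))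
      = (\<lambda>t. if t \<in> {-r..r} then (if m < \<bar>t\<bar> then u t else 0) - (r - max \<bar>t\<bar> m)^2/2 * w t else 0)"
    by (auto simp: fun_eq_iff pyramid_term_def infnorm pyramid cube u_def w_def)
  have line: "((\<lambda>t. pyramid_term r g (\<lambda>x. D2g x (axis k 1) (axis k 1)) k (vec_upd x k t))
      has_integral (r - m) * (u m + u (-m))) UNIV"
    unfolding line_eq has_integral_restrict_UNIV by (rule has_integral_plateau_weight[OF m u' v'])
  have "u m \<le> 0" "u (-m) \<le> 0"
    using diag diag_line m(1) by (auto simp: u_def)
  then have "(r - m) * (u m + u (-m)) \<le> 0"
    using m by (intro mult_nonneg_nonpos) auto
  with line show ?thesis by (rule integral_lborel_nonpos_if_has_integral)
qed

lemma harmonic_on_subset: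
  assumes "harmonic_on U h" and "open V" and "V \<subseteq> U"
  shows "harmonic_on V h"
proof -
  obtain Dh D2h where
    "\<forall>x\<in>U. (h has_derivative blinfun_apply (Dh x)) (at x)"
    "\<forall>x\<in>U. (Dh has_derivative blinfun_apply (D2h x)) (at x)"
    "continuous_on U D2h"
    "\<forall>x\<in>U. (\<Sum>i\<in>UNIV. D2h x (axis i 1) (axis i 1)) = 0"
    using assms(1) unfolding harmonic_on_def by blast
  with assms(2,3) show ?thesis
    unfolding harmonic_on_def by (blast intro: continuous_on_subset)
qed

lemma harmonic_on_imp_open: "harmonic_on U h \<Longrightarrow> open U"
  by (simp add: harmonic_on_def)

lemma harmonic_on_imp_continuous_on: "harmonic_on U h \<Longrightarrow> continuous_on U h"
  unfolding harmonic_on_def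
  by (meson continuous_at_imp_continuous_on has_derivative_continuous)

lemma harmonic_on_diff:
  assumes "harmonic_on U h1" and "harmonic_on U h2"
  shows "harmonic_on U (\<lambda>x. h1 x - h2 x)"
proof -
  obtain Dh1 D2h1 where "open U"
    and h1: "\<forall>x\<in>U. (h1 has_derivative blinfun_apply (Dh1 x)) (at x)"
      "\<forall>x\<in>U. (Dh1 has_derivative blinfun_apply (D2h1 x)) (at x)"
      "continuous_on U D2h1"
      "\<forall>x\<in>U. (\<Sum>i\<in>UNIV. D2h1 x (axis i 1) (axis i 1)) = 0"
    using assms(1) unfolding harmonic_on_def by blast
  obtain Dh2 D2h2 where
    h2: "\<forall>x\<in>U. (h2 has_derivative blinfun_apply (Dh2 x)) (at x)"
      "\<forall>x\<in>U. (Dh2 has_derivative blinfun_apply (D2h2 x)) (at x)"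
      "continuous_on U D2h2"
      "\<forall>x\<in>U. (\<Sum>i\<in>UNIV. D2h2 x (axis i 1) (axis i 1)) = 0"
    using assms(2) unfolding harmonic_on_def by blast
  show ?thesis
    unfolding harmonic_on_def
  proof (intro conjI exI[of _ "\<lambda>x. Dh1 x - Dh2 x"] exI[of _ "\<lambda>x. D2h1 x - D2h2 x"] ballI)
    fix x assume "x \<in> U"
    with h1 h2 show "((\<lambda>x. h1 x - h2 x) has_derivative blinfun_apply (Dh1 x - Dh2 x)) (at x)"
      and "((\<lambda>x. Dh1 x - Dh2 x) has_derivative blinfun_apply (D2h1 x - D2h2 x)) (at x)"
      unfolding minus_blinfun.rep_eq fun_diff_def by (auto intro!: has_derivative_diff)
    from \<open>x \<in> U\<close> h1(4) h2(4)
    show "(\<Sum>i\<in>UNIV. (D2h1 x - D2h2 x) (axis i 1) (axis i 1)) = 0"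
      by (simp add: blinfun.diff_left sum_subtractf)
  qed (use \<open>open U\<close> h1(3) h2(3) in \<open>auto intro: continuous_on_diff\<close>)
qed

lemma harmonic_near_diff:
  assumes "h1 \<in> harmonic_near K" and "h2 \<in> harmonic_near K"
  shows "(\<lambda>x. h1 x - h2 x) \<in> harmonic_near K"
proof -
  obtain U1 U2 where "K \<subseteq> U1" "harmonic_on U1 h1" "K \<subseteq> U2" "harmonic_on U2 h2"
    using assms by (auto simp: harmonic_near_def)
  moreover from this have "open (U1 \<inter> U2)"
    using harmonic_on_imp_open by blast
  ultimately have "K \<subseteq> U1 \<inter> U2" "harmonic_on (U1 \<inter> U2) (\<lambda>x. h1 x - h2 x)"
    by (auto intro!: harmonic_on_diff harmonic_on_subset[of U1 h1] harmonic_on_subset[of U2 h2])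
  then show ?thesis unfolding harmonic_near_def by blast
qed

lemma harmonic_near_imp_continuous_on: "h \<in> harmonic_near K \<Longrightarrow> continuous_on K h"
  unfolding harmonic_near_def by (auto intro: continuous_on_subset harmonic_on_imp_continuous_on)

lemma integral_cube_nonpos_if_diag_nonpos:
  fixes g :: "real^'n \<Rightarrow> real"
  assumes "CARD('n) \<ge> 2" and "harmonic_on U g" and "cube r \<subseteq> U"
    and diag: "\<And>x. x \<in> diag_set r \<Longrightarrow> g x \<le> 0"
  shows "integral (cube r) g \<le> 0"
proof -
  obtain Dg D2g where
    g': "\<And>x. x \<in> U \<Longrightarrow> (g has_derivative blinfun_apply (Dg x)) (at x)"
    and g'': "\<And>x. x \<in> U \<Longrightarrow> (Dg has_derivative blinfun_apply (D2g x)) (at x)"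
    and "continuous_on U D2g"
    and laplace: "\<And>x. x \<in> U \<Longrightarrow> (\<Sum>k\<in>UNIV. D2g x (axis k 1) (axis k 1)) = 0"
    using assms(2) unfolding harmonic_on_def by blast
  define gkk where "gkk k x = D2g x (axis k 1) (axis k 1)" for k x
  have "continuous_on (cube r) g"
    using harmonic_on_imp_continuous_on[OF assms(2)] assms(3) by (rule continuous_on_subset)
  moreover have "continuous_on (cube r) (gkk k)" for k
    using continuous_on_subset[OF \<open>continuous_on U D2g\<close> assms(3)]
    unfolding gkk_def by (intro continuous_intros)
  ultimately have integrable: "integrable lborel (pyramid_term r g (gkk k) k)" for k
    by (rule integrable_pyramid_term)
  have integrable_g: "integrable lborel (\<lambda>x. indicator (cube r) x * g x)"
    using borel_integrable_compact[OF _ \<open>continuous_on (cube r) g\<close>] by (simp add: cube_eq_cbox)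
  have "integral (cube r) g = (\<integral>x. indicator (cube r) x * g x \<partial>lborel)"
    using set_borel_integral_eq_integral(2)[of "cube r" g] integrable_g
    by (simp add: set_integrable_def set_lebesgue_integral_def)
  also have "\<dots> \<le> (\<integral>x. (\<Sum>k\<in>UNIV. pyramid_term r g (gkk k) k x) \<partial>lborel)"
  proof (rule integral_mono[OF integrable_g])
    show "integrable lborel (\<lambda>x. \<Sum>k\<in>UNIV. pyramid_term r g (gkk k) k x)"
      by (rule Bochner_Integration.integrable_sum[OF integrable])
    show "indicator (cube r) x * g x \<le> (\<Sum>k\<in>UNIV. pyramid_term r g (gkk k) k x)" for x
      using assms(3) by (intro indicator_cube_le_sum_pyramid_term diag) (auto simp: gkk_def laplace)
  qed
  also have "\<dots> = (\<Sum>k\<in>UNIV. \<integral>x. pyramid_term r g (gkk k) k x \<partial>lborel)"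
    by (rule Bochner_Integration.integral_sum[OF integrable])
  also have "\<dots> \<le> 0"
  proof (rule sum_nonpos)
    show "(\<integral>x. pyramid_term r g (gkk k) k x \<partial>lborel) \<le> 0" for k
      by (rule integral_lborel_nonpos_by_lines[OF integrable])
        (unfold gkk_def, rule line_integral_pyramid_term_nonpos[OF assms(1,3) g' g'' diag])
  qed
  finally show ?thesis .
qed

lemma L1norm_cube_eq_integral:
  assumes "continuous_on (cube r) g" and "\<And>x. x \<in> cube r \<Longrightarrow> 0 \<le> g x"
  shows "L1norm (cube r) g = integral (cube r) g"
proof -
  have "L1norm (cube r) g = integral\<^sup>L (lebesgue_on (cube r)) g"
    unfolding L1norm_def using assms(2)
    by (intro Bochner_Integration.integral_cong) (auto simp: space_restrict_space)
  also have "\<dots> = integral (cube r) g"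
    using continuous_imp_integrable[of _ _ g] assms(1)
    by (intro lebesgue_integral_eq_integral) (auto simp: cube_eq_cbox)
  finally show ?thesis .
qed

lemma diag_set_subset_cube: "diag_set r \<subseteq> cube r"
  by (auto simp: diag_set_def)

theorem theorem3:
  fixes r :: real and f hstar :: "real^'n \<Rightarrow> real"
  assumes "CARD('n) \<ge> 2"
    and "r > 0"
    and "continuous_on (cube r) f"
    and "hstar \<in> harmonic_below (cube r) f"
    and "\<forall>x\<in>diag_set r. f x - hstar x = 0"
  shows "\<forall>h\<in>harmonic_below (cube r) f.
           L1norm (cube r) (\<lambda>x. f x - hstar x) \<le> L1norm (cube r) (\<lambda>x. f x - h x)"
proof
  fix h assume "h \<in> harmonic_below (cube r) f"
  then have h: "h \<in> harmonic_near (cube r)" and h_le: "\<forall>x\<in>cube r. h x \<le> f x"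
    by (auto simp: harmonic_below_def)
  have hstar: "hstar \<in> harmonic_near (cube r)" and hstar_le: "\<forall>x\<in>cube r. hstar x \<le> f x"
    using assms(4) by (auto simp: harmonic_below_def)
  obtain U where "cube r \<subseteq> U" "harmonic_on U (\<lambda>x. h x - hstar x)"
    using harmonic_near_diff[OF h hstar] by (auto simp: harmonic_near_def)
  moreover have "h x - hstar x \<le> 0" if "x \<in> diag_set r" for x
    using that h_le assms(5) diag_set_subset_cube by fastforce
  ultimately have gap: "integral (cube r) (\<lambda>x. h x - hstar x) \<le> 0"
    by (intro integral_cube_nonpos_if_diag_nonpos[OF assms(1)])
  have cont: "continuous_on (cube r) (\<lambda>x. f x - h x)" "continuous_on (cube r) (\<lambda>x. h x - hstar x)"
    "continuous_on (cube r) (\<lambda>x. f x - hstar x)"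
    using assms(3) harmonic_near_imp_continuous_on[OF h] harmonic_near_imp_continuous_on[OF hstar]
    by (auto intro: continuous_on_diff)
  have "L1norm (cube r) (\<lambda>x. f x - hstar x) = integral (cube r) (\<lambda>x. f x - hstar x)"
    using cont(3) hstar_le by (simp add: L1norm_cube_eq_integral)
  also have "\<dots> = integral (cube r) (\<lambda>x. f x - h x) + integral (cube r) (\<lambda>x. h x - hstar x)"
    using cont(1,2) by (simp add: cube_eq_cbox integrable_continuous flip: integral_add)
  also have "\<dots> \<le> L1norm (cube r) (\<lambda>x. f x - h x)"
    using gap cont(1) h_le by (simp add: L1norm_cube_eq_integral)
  finally show "L1norm (cube r) (\<lambda>x. f x - hstar x) \<le> L1norm (cube r) (\<lambda>x. f x - h x)" .
qed

end
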